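(* Consider the Boosting SDP for input matrix $\hat A\in\mathbb R^{n\times n}$, labels $\ell\in\{-1,1\}^n$ with $L=\ell\ell^T$, and parameters $0<\zeta<1$, $d>0$, $K\ge10^4$. Suppose there are an $n\times n$ matrix $F$ and a subset $S\subseteq[n]$ with $|S|\ge(1-\theta)n$, where $\theta\le\zeta$, such that: (i) $(F\odot L)_{S\times S}$ is entrywise nonnegative; (ii) $(\hat A-F)_{S\times S}=Y+Z$ with $\|Y\|_{\mathrm{op}}\le Kd$ and $|Z_{ij}|\le Kd/(\zeta n)$ for all $i,j$; (iii) $((\hat A-F)\odot L)_{S\times S}$ is $(10dK^3,\theta dK)$-resolvable. Then setting $\rho=\theta$, $w_i=1$ for $i\notin S$ and $w_i=0$ for $i\in S$, $N$ the indicator matrix of $([n]\setminus S)\times([n]\setminus S)$, and $W$ the indicator matrix of $S\times S$ gives a feasible solution of the Boosting SDP with objective value $\rho=\theta$.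
   Context: Notation: $J$ all-ones matrix, $\mathbf 1$ all-ones vector, $\odot$ entrywise product, $\langle X,Y\rangle=\sum_{ij}X_{ij}Y_{ij}$, $\|\cdot\|_1$ trace norm, $\|\cdot\|_{\mathrm{op}}$ operator norm, $M_{S\times T}$ submatrix indexed by $S\times T$. Resolvability: an $m\times m$ matrix $X$ is $(d_1,d_2)$-resolvable if for all $x_1,\dots,x_m\in[0,1]$ with $\sum_ix_i\le10^{-6}m$, $\langle X,Y_x\rangle\ge d_1\sum_ix_i-d_2m$, where $(Y_x)_{ij}=x_i$. Pseudorectangles: $\mathcal R_n(\theta)$ is the set of $n\times n$ matrices $M$ with $0\le M_{ij}\le1$, $\sum_{ij}|M_{ij}|\le\theta^2n^2$, $\|M\|_1\le\theta n$. Approximate row selectors: $(M,x_1,\dots,x_n)\in\mathcal S_n(\theta,\delta)$ if $0\le M_{ij}\le1$, $0\le x_i\le1$, $\sum_ix_i\le\theta n$, and $M=Y_x-N$ for some $N\in\mathcal R_n(\sqrt{\theta\delta})$. Boosting SDP (inputs $\hat A,\ell$, parameters $\zeta,d,K$ with $0<\zeta<1$, $K\ge10^4$): variables $\rho\in[0,\zeta]$, $w\in\mathbb R^n$, $W\in\mathbb R^{n\times n}$, $N\in\mathcal R_n(\rho)$ with $0\le w_i\le1$, $\sum_iw_i\le\rho n$, $W_{ij}\ge0$, $W_{ij}=1-w_i-w_j+N_{ij}$ for all $i,j$, and for every $\rho'$ with $\rho/K\le\rho'\le\zeta$ and every $(M,x)\in\mathcal S_n(\rho',K\rho')$: $\langle\hat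 A\odot L\odot W,M\rangle\ge10dK^2\big(K\sum_ix_i(1-w_i)-\rho'n\big)$, where $L=\ell\ell^T$. Objective: minimize $\rho$. *)

theory Defs
  imports Complex_Main "Jordan_Normal_Form.Char_Poly"
begin

(* Matrices are functions nat => nat => real; an n x n matrix uses indices < n,
   and a submatrix M_{S x S} is M restricted to indices in S. *)

definition frob :: "nat set \<Rightarrow> (nat \<Rightarrow> nat \<Rightarrow> real) \<Rightarrow> (nat \<Rightarrow> nat \<Rightarrow> real) \<Rightarrow> real" where
  "frob I X Y = (\<Sum>i\<in>I. \<Sum>j\<in>I. X i j * Y i j)"

definition hadamard :: "(nat \<Rightarrow> nat \<Rightarrow> real) \<Rightarrow> (nat \<Rightarrow> nat \<Rightarrow> real) \<Rightarrow> (nat \<Rightarrow> nat \<Rightarrow> real)" where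
  "hadamard X Y = (\<lambda>i j. X i j * Y i j)"

definition rowmat :: "(nat \<Rightarrow> real) \<Rightarrow> (nat \<Rightarrow> nat \<Rightarrow> real)" where
  "rowmat x = (\<lambda>i j. x i)"

definition op_norm :: "nat set \<Rightarrow> (nat \<Rightarrow> nat \<Rightarrow> real) \<Rightarrow> real" where
  "op_norm I Y = Sup {sqrt (\<Sum>i\<in>I. (\<Sum>j\<in>I. Y i j * x j)\<^sup>2) | x. (\<Sum>j\<in>I. (x j)\<^sup>2) \<le> 1}"

(* trace norm of an n x n matrix: sum of singular values, i.e. sum of square roots of the
   eigenvalues (with algebraic multiplicity) of M^T M *)
definition trace_norm :: "nat \<Rightarrow> (nat \<Rightarrow> nat \<Rightarrow> real) \<Rightarrow> real" where
  "trace_norm n M = (let Mm = mat n n (\<lambda>(i, j). M i j); p = char_poly (transpose_mat Mm * Mm)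
     in (\<Sum>e\<in>{e. poly p e = 0}. real (order e p) * sqrt e))"

definition resolvable :: "nat set \<Rightarrow> (nat \<Rightarrow> nat \<Rightarrow> real) \<Rightarrow> real \<Rightarrow> real \<Rightarrow> bool" where
  "resolvable I X d1 d2 \<longleftrightarrow>
     (\<forall>x. (\<forall>i\<in>I. 0 \<le> x i \<and> x i \<le> 1) \<and> (\<Sum>i\<in>I. x i) \<le> 10 powr (-6) * real (card I) \<longrightarrow>
          frob I X (rowmat x) \<ge> d1 * (\<Sum>i\<in>I. x i) - d2 * real (card I))"

definition pseudorect :: "nat \<Rightarrow> real \<Rightarrow> (nat \<Rightarrow> nat \<Rightarrow> real) \<Rightarrow> bool" where
  "pseudorect n \<theta> M \<longleftrightarrow>
     (\<forall>i<n. \<forall>j<n. 0 \<le> M i j \<and> M i j \<le> 1) \<and>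
     (\<Sum>i<n. \<Sum>j<n. \<bar>M i j\<bar>) \<le> \<theta>\<^sup>2 * (real n)\<^sup>2 \<and>
     trace_norm n M \<le> \<theta> * real n"

definition row_selector :: "nat \<Rightarrow> real \<Rightarrow> real \<Rightarrow> (nat \<Rightarrow> nat \<Rightarrow> real) \<Rightarrow> (nat \<Rightarrow> real) \<Rightarrow> bool" where
  "row_selector n \<theta> \<delta> M x \<longleftrightarrow>
     (\<forall>i<n. \<forall>j<n. 0 \<le> M i j \<and> M i j \<le> 1) \<and>
     (\<forall>i<n. 0 \<le> x i \<and> x i \<le> 1) \<and>
     (\<Sum>i<n. x i) \<le> \<theta> * real n \<and>
     (\<exists>N. pseudorect n (sqrt (\<theta> * \<delta>)) N \<and> (\<forall>i<n. \<forall>j<n. M i j = rowmat x i j - N i j))"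

definition boost_feasible :: "nat \<Rightarrow> (nat \<Rightarrow> nat \<Rightarrow> real) \<Rightarrow> (nat \<Rightarrow> real) \<Rightarrow> real \<Rightarrow> real \<Rightarrow> real \<Rightarrow>
     real \<Rightarrow> (nat \<Rightarrow> real) \<Rightarrow> (nat \<Rightarrow> nat \<Rightarrow> real) \<Rightarrow> (nat \<Rightarrow> nat \<Rightarrow> real) \<Rightarrow> bool" where
  "boost_feasible n A l \<zeta> d K \<rho> w W N \<longleftrightarrow>
     0 \<le> \<rho> \<and> \<rho> \<le> \<zeta> \<and>
     pseudorect n \<rho> N \<and>
     (\<forall>i<n. 0 \<le> w i \<and> w i \<le> 1) \<and>
     (\<Sum>i<n. w i) \<le> \<rho> * real n \<and>
     (\<forall>i<n. \<forall>j<n. W i j \<ge> 0 \<and> W i j = 1 - w i - w j + N i j) \<and>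
     (\<forall>\<rho>'. \<rho> / K \<le> \<rho>' \<and> \<rho>' \<le> \<zeta> \<longrightarrow>
        (\<forall>M x. row_selector n \<rho>' (K * \<rho>') M x \<longrightarrow>
           frob {..<n} (hadamard (hadamard A (\<lambda>i j. l i * l j)) W) M
             \<ge> 10 * d * K\<^sup>2 * (K * (\<Sum>i<n. x i * (1 - w i)) - \<rho>' * real n)))"

end

theory Submission
  imports Defs "HOL-Analysis.L2_Norm" "HOL-Analysis.Convex"
begin

text \<open>
  All constraints but the last are bookkeeping, except that the indicator of the complement block
  has rank one, so its trace norm is n - |S| <= theta n. For the last one write M = Y_x - N with N a
  pseudorectangle. As W restricts A o L to S x S, the pairing splits into <F o L, M> >= 0, the term
  <X, Y_x> with X = (A - F) o L, which resolvability bounds from below (after rescaling x when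
  sum x_i is large), and -<X, N>. Since X = L o (Y + Z) on S x S, the Y-part of <X, N> is at most
  ||Y||_op ||N||_1 by trace-norm duality, proved via the spectral theorem for N^T N, and the
  Z-part is at most max |Z_ij| * sum N_ij. The same noise bound for the all-ones block on S,
  played against resolvability at x = 1, forces theta <= 1/100, which pays for the rescaling loss.
\<close>

definition fmult :: "nat \<Rightarrow> (nat \<Rightarrow> nat \<Rightarrow> real) \<Rightarrow> (nat \<Rightarrow> nat \<Rightarrow> real) \<Rightarrow> nat \<Rightarrow> nat \<Rightarrow> real" where
  "fmult m A B = (\<lambda>i j. \<Sum>k<m. A i k * B k j)"

definition ftrans :: "(nat \<Rightarrow> nat \<Rightarrow> real) \<Rightarrow> nat \<Rightarrow> nat \<Rightarrow> real" where
  "ftrans A = (\<lambda>i j. A j i)"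

definition fone :: "nat \<Rightarrow> nat \<Rightarrow> real" where
  "fone = (\<lambda>i j. if i = j then 1 else 0)"

definition fdiag :: "(nat \<Rightarrow> real) \<Rightarrow> nat \<Rightarrow> nat \<Rightarrow> real" where
  "fdiag d = (\<lambda>i j. if i = j then d i else 0)"

definition orthogonal_fn :: "nat \<Rightarrow> (nat \<Rightarrow> nat \<Rightarrow> real) \<Rightarrow> bool" where
  "orthogonal_fn m W \<longleftrightarrow>
     (\<forall>i<m. \<forall>j<m. fmult m (ftrans W) W i j = fone i j) \<and> (\<forall>i<m. \<forall>j<m. fmult m W (ftrans W) i j = fone i j)"

lemma fmult_assoc: "fmult m (fmult m A B) C = fmult m A (fmult m B C)"
  unfolding fmult_def
  by (rule ext, rule ext, simp add: sum_distrib_left sum_distrib_right mult.assoc, rule sum.swap)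

lemma ftrans_fmult: "ftrans (fmult m A B) = fmult m (ftrans B) (ftrans A)"
  by (auto simp: fmult_def ftrans_def mult.commute intro!: ext)

lemma ftrans_fone [simp]: "ftrans fone = fone"
  by (auto simp: ftrans_def fone_def intro!: ext)

lemma sum_fone_left [simp]:
  assumes "i < m"
  shows "(\<Sum>k<m. fone i k * f k) = f i"
proof -
  have "(\<Sum>k<m. fone i k * f k) = (\<Sum>k<m. if i = k then f k else 0)"
    by (rule sum.cong) (auto simp: fone_def)
  with assms show ?thesis by simp
qed

lemma sum_fone_right [simp]:
  assumes "i < m"
  shows "(\<Sum>k<m. f k * fone k i) = f i"
proof -
  have "(\<Sum>k<m. f k * fone k i) = (\<Sum>k<m. if k = i then f k else 0)"
    by (rule sum.cong) (auto simp: fone_def)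
  with assms show ?thesis by simp
qed

lemma fmult_fone_left [simp]: "i < m \<Longrightarrow> fmult m fone A i j = A i j"
  by (simp add: fmult_def)

lemma fmult_fone_right [simp]: "j < m \<Longrightarrow> fmult m A fone i j = A i j"
  by (simp add: fmult_def)

lemma fmult_fdiag_right [simp]: "j < m \<Longrightarrow> fmult m A (fdiag d) i j = A i j * d j"
  using sum_fone_right[of j m "\<lambda>k. A i k * d k"]
  by (simp add: fmult_def fdiag_def fone_def if_distrib if_distribR cong: if_cong)

lemma fmult_cong:
  "(\<And>k. k < m \<Longrightarrow> A i k = A' i k) \<Longrightarrow> (\<And>k. k < m \<Longrightarrow> B k j = B' k j) \<Longrightarrow>
    fmult m A B i j = fmult m A' B' i j"
  by (simp add: fmult_def)

lemma fmult_cong_mid: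
  "(\<And>k l. k < m \<Longrightarrow> l < m \<Longrightarrow> C k l = C' k l) \<Longrightarrow>
    fmult m (fmult m A C) D i j = fmult m (fmult m A C') D i j"
  by (intro fmult_cong refl) (simp add: fmult_def)

lemma fmult_fdiag_ftrans: "fmult m (fmult m W (fdiag d)) (ftrans W) i j = (\<Sum>k<m. W i k * d k * W j k)"
  by (simp add: fmult_def[of m "fmult m W (fdiag d)"] ftrans_def)

lemma orthogonal_fn_cols:
  "orthogonal_fn m W \<Longrightarrow> i < m \<Longrightarrow> j < m \<Longrightarrow> (\<Sum>k<m. W k i * W k j) = fone i j"
  by (simp add: orthogonal_fn_def fmult_def ftrans_def)

lemma orthogonal_fn_rows:
  "orthogonal_fn m W \<Longrightarrow> i < m \<Longrightarrow> j < m \<Longrightarrow> (\<Sum>k<m. W i k * W j k) = fone i j"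
  by (simp add: orthogonal_fn_def fmult_def ftrans_def)

lemma orthogonal_fn_fone: "orthogonal_fn m fone"
  by (simp add: orthogonal_fn_def)

lemma orthogonal_fn_fmult:
  assumes A: "orthogonal_fn m A" and B: "orthogonal_fn m B"
  shows "orthogonal_fn m (fmult m A B)"
proof -
  have "fmult m (ftrans (fmult m A B)) (fmult m A B) i j = fone i j" if "i < m" "j < m" for i j
  proof -
    have "fmult m (ftrans (fmult m A B)) (fmult m A B) i j = fmult m (fmult m (ftrans B) (fmult m (ftrans A) A)) B i j"
      by (simp add: ftrans_fmult fmult_assoc)
    also have "\<dots> = fmult m (fmult m (ftrans B) fone) B i j"
      using A by (intro fmult_cong_mid) (simp add: orthogonal_fn_def)
    also have "\<dots> = fmult m (ftrans B) B i j"
      by (rule fmult_cong) simp_all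
    also have "\<dots> = fone i j"
      using B that by (simp add: orthogonal_fn_def)
    finally show ?thesis .
  qed
  moreover have "fmult m (fmult m A B) (ftrans (fmult m A B)) i j = fone i j" if "i < m" "j < m" for i j
  proof -
    have "fmult m (fmult m A B) (ftrans (fmult m A B)) i j = fmult m (fmult m A (fmult m B (ftrans B))) (ftrans A) i j"
      by (simp add: ftrans_fmult fmult_assoc)
    also have "\<dots> = fmult m (fmult m A fone) (ftrans A) i j"
      using B by (intro fmult_cong_mid) (simp add: orthogonal_fn_def)
    also have "\<dots> = fmult m A (ftrans A) i j"
      by (rule fmult_cong) simp_all
    also have "\<dots> = fone i j"
      using A that by (simp add: orthogonal_fn_def)
    finally show ?thesis .
  qed
  ultimately show ?thesis by (simp add: orthogonal_fn_def)
qed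

section \<open>Spectral theorem for real symmetric matrices\<close>

lemma complex_eigenvector_exists:
  fixes B :: "nat \<Rightarrow> nat \<Rightarrow> real"
  assumes "0 < m"
  shows "\<exists>(z::complex) v. (\<exists>k<m. v k \<noteq> 0) \<and> (\<forall>i<m. (\<Sum>j<m. of_real (B i j) * v j) = z * v i)"
proof -
  define Bc where "Bc = mat m m (\<lambda>(i, j). complex_of_real (B i j))"
  have Bc: "Bc \<in> carrier_mat m m" by (simp add: Bc_def)
  have "degree (char_poly Bc) = m" using degree_monic_char_poly[OF Bc] by simp
  then have "\<not> constant (poly (char_poly Bc))" using constant_degree[of "char_poly Bc"] assms by simp
  then obtain z where "poly (char_poly Bc) z = 0" using fundamental_theorem_of_algebra by blast
  then have "eigenvalue Bc z" using eigenvalue_root_char_poly[OF Bc] by simp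
  then obtain v where v: "v \<in> carrier_vec m" "v \<noteq> 0\<^sub>v m" "Bc *\<^sub>v v = z \<cdot>\<^sub>v v"
    unfolding eigenvalue_def eigenvector_def using Bc by auto
  have "\<exists>k<m. v $ k \<noteq> 0"
    using v(1,2) by (metis carrier_vecD eq_vecI index_zero_vec)
  moreover have "(\<Sum>j<m. of_real (B i j) * v $ j) = z * v $ i" if "i < m" for i
  proof -
    have "(Bc *\<^sub>v v) $ i = (z \<cdot>\<^sub>v v) $ i" using v(3) by simp
    then show ?thesis using that v(1) by (simp add: Bc_def scalar_prod_def atLeast0LessThan)
  qed
  ultimately show ?thesis
    by (intro exI[of _ z] exI[of _ "\<lambda>j. v $ j"]) simp
qed

lemma symmetric_eigenvalue_real:
  fixes B :: "nat \<Rightarrow> nat \<Rightarrow> real" and v :: "nat \<Rightarrow> complex"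
  assumes sym: "\<forall>i<m. \<forall>j<m. B i j = B j i"
    and eig: "\<forall>i<m. (\<Sum>j<m. of_real (B i j) * v j) = z * v i"
    and nonzero: "\<exists>k<m. v k \<noteq> 0"
  shows "Im z = 0"
proof -
  define q where "q = (\<Sum>i<m. cnj (v i) * (\<Sum>j<m. of_real (B i j) * v j))"
  define r where "r = (\<Sum>i<m. (cmod (v i))\<^sup>2)"
  have "q = (\<Sum>i<m. z * (v i * cnj (v i)))"
    unfolding q_def using eig by (intro sum.cong) (auto simp: mult_ac)
  then have q_eig: "q = z * of_real r"
    by (simp add: r_def sum_distrib_left flip: complex_norm_square)
  have "cnj q = (\<Sum>i<m. \<Sum>j<m. v i * of_real (B i j) * cnj (v j))"
    by (simp add: q_def sum_distrib_left mult_ac)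
  also have "\<dots> = (\<Sum>j<m. \<Sum>i<m. v i * of_real (B i j) * cnj (v j))"
    by (rule sum.swap)
  also have "\<dots> = q"
    using sym by (auto simp: q_def sum_distrib_left mult_ac intro!: sum.cong)
  finally have "cnj z * of_real r = z * of_real r"
    using q_eig by simp
  moreover have "r > 0"
  proof -
    obtain k where "k < m" "v k \<noteq> 0" using nonzero by blast
    then have "0 < (cmod (v k))\<^sup>2" "(cmod (v k))\<^sup>2 \<le> r"
      unfolding r_def by (auto intro!: member_le_sum)
    then show ?thesis by linarith
  qed
  ultimately have "cnj z = z" by simp
  then show ?thesis by (simp add: complex_eq_iff)
qed

lemma symmetric_real_eigenvector:
  fixes B :: "nat \<Rightarrow> nat \<Rightarrow> real"
  assumes "0 < m" and sym: "\<forall>i<m. \<forall>j<m. B i j = B j i"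
  shows "\<exists>lam x. (\<exists>k<m. x k \<noteq> 0) \<and> (\<forall>i<m. (\<Sum>j<m. B i j * x j) = lam * x i)"
proof -
  obtain z :: complex and v where nz: "\<exists>k<m. v k \<noteq> 0" and eig: "\<forall>i<m. (\<Sum>j<m. of_real (B i j) * v j) = z * v i"
    using complex_eigenvector_exists[OF \<open>0 < m\<close>] by blast
  have z: "Im z = 0" by (rule symmetric_eigenvalue_real[OF sym eig nz])
  have re: "(\<Sum>j<m. B i j * Re (v j)) = Re z * Re (v i)"
    and im: "(\<Sum>j<m. B i j * Im (v j)) = Re z * Im (v i)" if "i < m" for i
    using arg_cong[OF eig[rule_format, OF that], of Re] arg_cong[OF eig[rule_format, OF that], of Im] z
    by (simp_all add: Re_sum Im_sum)
  obtain k where k: "k < m" "v k \<noteq> 0" using nz by blast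
  then consider "Re (v k) \<noteq> 0" | "Im (v k) \<noteq> 0" using complex_eq_iff by force
  then show ?thesis
  proof cases
    case 1
    with k(1) re show ?thesis by (intro exI[of _ "Re z"] exI[of _ "\<lambda>j. Re (v j)"]) blast
  next
    case 2
    with k(1) im show ?thesis by (intro exI[of _ "Re z"] exI[of _ "\<lambda>j. Im (v j)"]) blast
  qed
qed

lemma symmetric_unit_eigenvector:
  fixes B :: "nat \<Rightarrow> nat \<Rightarrow> real"
  assumes "0 < m" and sym: "\<forall>i<m. \<forall>j<m. B i j = B j i"
  shows "\<exists>lam u. (\<Sum>k<m. (u k)\<^sup>2) = 1 \<and> (\<forall>i<m. (\<Sum>j<m. B i j * u j) = lam * u i)"
proof -
  obtain lam x where x: "\<exists>k<m. x k \<noteq> 0" and Bx: "\<forall>i<m. (\<Sum>j<m. B i j * x j) = lam * x i"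
    using symmetric_real_eigenvector[OF assms] by blast
  define q where "q = (\<Sum>k<m. (x k)\<^sup>2)"
  have "q > 0"
  proof -
    obtain k where "k < m" "x k \<noteq> 0" using x by blast
    then have "(x k)\<^sup>2 > 0" "(x k)\<^sup>2 \<le> q" unfolding q_def by (auto intro!: member_le_sum)
    then show ?thesis by linarith
  qed
  then have "(\<Sum>k<m. (x k / sqrt q)\<^sup>2) = 1"
    by (simp add: power_divide q_def[symmetric] flip: sum_divide_distrib)
  moreover have "\<forall>i<m. (\<Sum>j<m. B i j * (x j / sqrt q)) = lam * (x i / sqrt q)"
    using Bx by (simp add: sum_divide_distrib[symmetric] mult.assoc)
  ultimately show ?thesis
    by (intro exI[of _ lam] exI[of _ "\<lambda>k. x k / sqrt q"]) auto
qed

lemma householder_reflection: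
  assumes "0 < m" and u: "(\<Sum>k<m. (u k)\<^sup>2) = 1"
  shows "\<exists>H. orthogonal_fn m H \<and> ftrans H = H \<and> (\<forall>i<m. H i 0 = u i)"
proof -
  have split0: "(\<Sum>k<m. f k) = f 0 + (\<Sum>k\<in>{1..<m}. f k)" for f :: "nat \<Rightarrow> real"
    using \<open>0 < m\<close> sum.atLeast_Suc_lessThan[of 0 m f] by (simp add: atLeast0LessThan)
  have "(u 0)\<^sup>2 \<le> 1"
    using u split0[of "\<lambda>k. (u k)\<^sup>2"] sum_nonneg[of "{1..<m}" "\<lambda>k. (u k)\<^sup>2"] by simp
  then have "u 0 \<le> 1" by (metis abs_le_D1 abs_square_le_1)
  show ?thesis
  proof (cases "u 0 = 1")
    case True
    then have "(\<Sum>k\<in>{1..<m}. (u k)\<^sup>2) = 0" using u split0[of "\<lambda>k. (u k)\<^sup>2"] by simp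
    then have "\<forall>k. 0 < k \<and> k < m \<longrightarrow> u k = 0" by (simp add: sum_nonneg_eq_0_iff)
    with True have "\<forall>i<m. fone i 0 = u i" by (auto simp: fone_def)
    then show ?thesis by (intro exI[of _ fone]) (simp add: orthogonal_fn_fone)
  next
    case False
    with \<open>u 0 \<le> 1\<close> have u0: "u 0 < 1" by simp
    define w where "w = (\<lambda>k. u k - fone k 0)"
    define s where "s = (\<Sum>k<m. (w k)\<^sup>2)"
    have "s = (\<Sum>k<m. (u k)\<^sup>2) - 2 * (\<Sum>k<m. u k * fone k 0) + (\<Sum>k<m. fone k 0 * fone k 0)"
      unfolding s_def w_def
      by (simp add: power2_eq_square algebra_simps sum.distrib sum_subtractf sum_distrib_left)
    also have "\<dots> = 2 - 2 * u 0"
      using \<open>0 < m\<close> u by (simp, simp add: fone_def)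
    finally have s: "s = 2 - 2 * u 0" .
    with u0 have "s > 0" by simp
    \<comment> \<open>the reflection \<open>I - 2 w w\<^sup>T / |w|\<^sup>2\<close> in the hyperplane orthogonal to \<open>w = u - e\<^sub>0\<close> swaps \<open>e\<^sub>0\<close> and \<open>u\<close>\<close>
    define c where "c = 2 / s"
    have cs: "c * s = 2" using \<open>s > 0\<close> by (simp add: c_def)
    define H where "H = (\<lambda>i j. fone i j - c * w i * w j)"
    have H_sym: "ftrans H = H" by (auto simp: ftrans_def H_def fone_def intro!: ext)
    have HH: "fmult m H H i j = fone i j" if "i < m" "j < m" for i j
    proof -
      have "fmult m H H i j = (\<Sum>k<m. fone i k * fone k j - fone i k * (c * w k * w j)
          - (c * w i * w k) * fone k j + (c * c * w i * w j) * (w k)\<^sup>2)"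
        unfolding fmult_def H_def by (rule sum.cong[OF refl]) (simp add: algebra_simps power2_eq_square)
      also have "\<dots> = (\<Sum>k<m. fone i k * fone k j) - (\<Sum>k<m. fone i k * (c * w k * w j))
          - (\<Sum>k<m. (c * w i * w k) * fone k j) + (c * c * w i * w j) * s"
        unfolding s_def by (simp only: sum.distrib sum_subtractf sum_distrib_left)
      also have "\<dots> = fone i j - c * w i * w j - c * w i * w j + c * c * w i * w j * s"
        using that by simp
      also have "\<dots> = fone i j + c * w i * w j * (c * s - 2)"
        by (simp add: algebra_simps)
      finally show ?thesis by (simp add: cs)
    qed
    have "H i 0 = u i" if "i < m" for i
    proof -
      have cw: "c * w 0 = -1" using s u0 by (simp add: c_def w_def fone_def field_simps)
      have "H i 0 = fone i 0 - (c * w 0) * w i" by (simp add: H_def mult_ac)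
      also have "\<dots> = u i" unfolding cw by (simp add: w_def)
      finally show ?thesis .
    qed
    moreover have "orthogonal_fn m H" unfolding orthogonal_fn_def H_sym using HH by simp
    ultimately show ?thesis using H_sym by blast
  qed
qed

lemma householder_deflation:
  assumes "0 < m" and H: "orthogonal_fn m H" "ftrans H = H"
    and sym: "\<forall>i<m. \<forall>j<m. B i j = B j i"
    and eig: "\<forall>i<m. (\<Sum>j<m. B i j * H j 0) = lam * H i 0"
  shows "\<forall>i<m. \<forall>j<m. fmult m (fmult m H B) H i j = fmult m (fmult m H B) H j i"
    and "\<forall>i<m. fmult m (fmult m H B) H i 0 = lam * fone i 0"
proof -
  have H_sym: "H i j = H j i" for i j
    using fun_cong[OF fun_cong[OF H(2)], of i j] by (simp add: ftrans_def)
  have C: "fmult m (fmult m H B) H i j = (\<Sum>k<m. \<Sum>a<m. H i a * B a k * H k j)" for i j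
    unfolding fmult_def by (simp add: sum_distrib_right)
  show "\<forall>i<m. \<forall>j<m. fmult m (fmult m H B) H i j = fmult m (fmult m H B) H j i"
  proof (intro allI impI)
    fix i j assume "i < m" "j < m"
    have "(\<Sum>k<m. \<Sum>a<m. H i a * B a k * H k j) = (\<Sum>a<m. \<Sum>k<m. H i a * B a k * H k j)"
      by (rule sum.swap)
    also have "\<dots> = (\<Sum>k<m. \<Sum>a<m. H j a * B a k * H k i)"
      using sym H_sym by (auto intro!: sum.cong simp: mult_ac)
    finally show "fmult m (fmult m H B) H i j = fmult m (fmult m H B) H j i"
      by (simp only: C)
  qed
  show "\<forall>i<m. fmult m (fmult m H B) H i 0 = lam * fone i 0"
  proof (intro allI impI)
    fix i assume "i < m"
    have "fmult m (fmult m H B) H i 0 = fmult m H (fmult m B H) i 0"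
      by (simp add: fmult_assoc)
    also have "\<dots> = fmult m H (\<lambda>a j. lam * H a j) i 0"
      using eig by (intro fmult_cong) (simp_all add: fmult_def)
    also have "\<dots> = lam * fmult m (ftrans H) H i 0"
      by (simp add: fmult_def sum_distrib_left mult_ac H(2))
    also have "\<dots> = lam * fone i 0"
      using H(1) \<open>i < m\<close> \<open>0 < m\<close> by (simp add: orthogonal_fn_def)
    finally show "fmult m (fmult m H B) H i 0 = lam * fone i 0" .
  qed
qed

lemma orthogonal_fnI:
  assumes "\<forall>i<m. \<forall>j<m. (\<Sum>k<m. W k i * W k j) = fone i j"
    and "\<forall>i<m. \<forall>j<m. (\<Sum>k<m. W i k * W j k) = fone i j"
  shows "orthogonal_fn m W"
  using assms by (simp add: orthogonal_fn_def fmult_def ftrans_def)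

lemma spectral_block_extension:
  assumes sym: "\<forall>i<Suc m. \<forall>j<Suc m. C i j = C j i"
    and C0: "\<forall>i<Suc m. C i 0 = lam * fone i 0"
    and W': "orthogonal_fn m W'"
    and dec: "\<forall>i<m. \<forall>j<m. C (Suc i) (Suc j) = (\<Sum>k<m. W' i k * d' k * W' j k)"
  shows "\<exists>E d. orthogonal_fn (Suc m) E \<and> (\<forall>i<Suc m. \<forall>j<Suc m. C i j = (\<Sum>k<Suc m. E i k * d k * E j k))"
proof -
  define E where "E = (\<lambda>i j. case i of 0 \<Rightarrow> fone 0 j | Suc i' \<Rightarrow> (case j of 0 \<Rightarrow> 0 | Suc j' \<Rightarrow> W' i' j'))"
  define d where "d = (\<lambda>k. case k of 0 \<Rightarrow> lam | Suc k' \<Rightarrow> d' k')"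
  note shift = sum.lessThan_Suc_shift
  have E: "orthogonal_fn (Suc m) E"
  proof (rule orthogonal_fnI; intro allI impI)
    fix i j assume "i < Suc m" "j < Suc m"
    then show "(\<Sum>k<Suc m. E k i * E k j) = fone i j" "(\<Sum>k<Suc m. E i k * E j k) = fone i j"
      using orthogonal_fn_cols[OF W'] orthogonal_fn_rows[OF W']
      by (cases i; cases j; simp add: E_def fone_def shift del: sum.lessThan_Suc)+
  qed
  have C0': "\<forall>j<Suc m. C 0 j = lam * fone 0 j"
    using sym C0 by (simp add: fone_def)
  have "C i j = (\<Sum>k<Suc m. E i k * d k * E j k)" if "i < Suc m" "j < Suc m" for i j
    using that C0 C0' dec
    by (cases i; cases j; simp add: E_def d_def fone_def shift del: sum.lessThan_Suc)
  with E show ?thesis by blast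
qed

theorem symmetric_spectral_decomposition:
  assumes "\<forall>i<m. \<forall>j<m. B i j = B j i"
  shows "\<exists>W d. orthogonal_fn m W \<and> (\<forall>i<m. \<forall>j<m. B i j = (\<Sum>k<m. W i k * d k * W j k))"
  using assms
proof (induction m arbitrary: B)
  case 0
  show ?case using orthogonal_fn_fone by blast
next
  case (Suc m)
  obtain lam u where u: "(\<Sum>k<Suc m. (u k)\<^sup>2) = 1" and Bu: "\<forall>i<Suc m. (\<Sum>j<Suc m. B i j * u j) = lam * u i"
    using symmetric_unit_eigenvector[OF _ Suc.prems] by blast
  obtain H where H: "orthogonal_fn (Suc m) H" "ftrans H = H" and H0: "\<forall>i<Suc m. H i 0 = u i"
    using householder_reflection[OF _ u] by blast
  define C where "C = fmult (Suc m) (fmult (Suc m) H B) H"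
  have C_sym: "\<forall>i<Suc m. \<forall>j<Suc m. C i j = C j i" and C0: "\<forall>i<Suc m. C i 0 = lam * fone i 0"
  proof -
    have "\<forall>i<Suc m. (\<Sum>j<Suc m. B i j * H j 0) = lam * H i 0"
      using Bu H0 by (simp del: sum.lessThan_Suc)
    from householder_deflation[OF _ H Suc.prems this] show
      "\<forall>i<Suc m. \<forall>j<Suc m. C i j = C j i" "\<forall>i<Suc m. C i 0 = lam * fone i 0"
      unfolding C_def by simp_all
  qed
  obtain W' d' where W': "orthogonal_fn m W'"
    and dec': "\<forall>i<m. \<forall>j<m. C (Suc i) (Suc j) = (\<Sum>k<m. W' i k * d' k * W' j k)"
    using Suc.IH[of "\<lambda>i j. C (Suc i) (Suc j)"] C_sym by auto
  obtain E d where E: "orthogonal_fn (Suc m) E"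
    and dec: "\<forall>i<Suc m. \<forall>j<Suc m. C i j = (\<Sum>k<Suc m. E i k * d k * E j k)"
    using spectral_block_extension[OF C_sym C0 W' dec'] by blast
  have HH: "fmult (Suc m) H H i j = fone i j" if "i < Suc m" "j < Suc m" for i j
    using H that by (simp add: orthogonal_fn_def)
  have "B i j = (\<Sum>k<Suc m. fmult (Suc m) H E i k * d k * fmult (Suc m) H E j k)"
    if "i < Suc m" "j < Suc m" for i j
  proof -
    have "B i j = fmult (Suc m) (fmult (Suc m) (fmult (Suc m) H H) B) (fmult (Suc m) H H) i j"
      using that HH by (simp add: fmult_cong_mid[where C' = fone] cong: fmult_cong)
    also have "\<dots> = fmult (Suc m) (fmult (Suc m) H C) H i j"
      by (simp add: C_def fmult_assoc)
    also have "\<dots> = fmult (Suc m) (fmult (Suc m) H (fmult (Suc m) (fmult (Suc m) E (fdiag d)) (ftrans E))) H i j"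
      using dec by (intro fmult_cong_mid) (simp add: fmult_fdiag_ftrans)
    also have "\<dots> = fmult (Suc m) (fmult (Suc m) (fmult (Suc m) H E) (fdiag d)) (ftrans (fmult (Suc m) H E)) i j"
      by (simp add: fmult_assoc ftrans_fmult H(2))
    finally show ?thesis by (simp add: fmult_fdiag_ftrans)
  qed
  with orthogonal_fn_fmult[OF H(1) E] show ?case by blast
qed

section \<open>Trace norm\<close>

lemma fmult_ftrans_orthogonal_right:
  assumes "orthogonal_fn n W" "j < n"
  shows "fmult n (fmult n A (ftrans W)) W i j = A i j"
proof -
  have "fmult n (fmult n A (ftrans W)) W i j = fmult n A (fmult n (ftrans W) W) i j"
    by (simp add: fmult_assoc)
  also have "\<dots> = fmult n A fone i j"
    using assms by (intro fmult_cong) (simp_all add: orthogonal_fn_def)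
  finally show ?thesis using assms(2) by simp
qed

lemma fmult_ftrans_orthogonal_left:
  assumes "orthogonal_fn n W" "i < n"
  shows "fmult n (ftrans W) (fmult n W A) i j = A i j"
proof -
  have "fmult n (ftrans W) (fmult n W A) i j = fmult n (fmult n (ftrans W) W) A i j"
    by (simp add: fmult_assoc)
  also have "\<dots> = fmult n fone A i j"
    using assms by (intro fmult_cong) (simp_all add: orthogonal_fn_def)
  finally show ?thesis using assms(2) by simp
qed

lemma mat_mult_mat_fn: "mat n n f * mat n n g = mat n n (\<lambda>(i, j). \<Sum>k<n. f (i, k) * g (k, j))"
  by (rule eq_matI) (auto simp: scalar_prod_def atLeast0LessThan row_def col_def)

lemma transpose_mat_fn: "transpose_mat (mat n n f) = mat n n (\<lambda>(i, j). f (j, i))"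
  by (rule eq_matI) auto

lemma prod_linear_nonzero: "(\<Prod>a\<leftarrow>xs. [:- a, 1:]) \<noteq> (0 :: real poly)"
  by (induction xs) (simp_all only: list.map prod_list.Cons prod_list.Nil mult_eq_0_iff, simp_all)

lemma poly_prod_linear_eq_0_iff: "poly (\<Prod>a\<leftarrow>xs. [:- a, 1:]) e = 0 \<longleftrightarrow> e \<in> set (xs :: real list)"
  by (induction xs) (simp_all only: list.map prod_list.Cons prod_list.Nil poly_mult mult_eq_0_iff, auto)

lemma order_prod_linear: "order e (\<Prod>a\<leftarrow>xs. [:- a, 1:]) = count_list xs (e :: real)"
proof (induction xs)
  case Nil
  then show ?case by (simp add: order_1)
next
  case (Cons a xs)
  have "order e (\<Prod>a\<leftarrow>a # xs. [:- a, 1:]) = order e [:- a, 1:] + order e (\<Prod>a\<leftarrow>xs. [:- a, 1:])"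
    using prod_linear_nonzero[of "a # xs"] by (simp only: list.map prod_list.Cons) (rule order_mult)
  then show ?case using Cons by (simp add: order_linear')
qed

lemma sum_list_map_eq_sum_count_real:
  "sum_list (map f xs) = (\<Sum>x\<in>set xs. real (count_list xs x) * (f x :: real))"
proof (induction xs)
  case (Cons x xs)
  show ?case
  proof (cases "x \<in> set xs")
    case True
    then have "(\<Sum>y\<in>set (x # xs). real (count_list (x # xs) y) * f y)
        = (\<Sum>y\<in>set xs. real (count_list xs y) * f y + (if y = x then f y else 0))"
      by (intro sum.cong) (auto simp: algebra_simps)
    also have "\<dots> = sum_list (map f (x # xs))"
      using True Cons.IH by (simp add: sum.distrib)
    finally show ?thesis by simp
  next
    case False
    then have "(\<Sum>y\<in>set xs. real (count_list (x # xs) y) * f y) = (\<Sum>y\<in>set xs. real (count_list xs y) * f y)"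
      by (intro sum.cong) auto
    then show ?thesis using False Cons.IH by (simp add: count_list_0_iff)
  qed
qed simp

lemma trace_norm_diagonalized:
  assumes W: "orthogonal_fn n W"
    and MW: "\<forall>i<n. \<forall>j<n. (\<Sum>k<n. M k i * M k j) = (\<Sum>k<n. W i k * d k * W j k)"
  shows "trace_norm n M = (\<Sum>k<n. sqrt (d k))"
proof -
  define A where "A = transpose_mat (mat n n (\<lambda>(i, j). M i j)) * mat n n (\<lambda>(i, j). M i j)"
  define Wm where "Wm = mat n n (\<lambda>(i, j). W i j)"
  define Wt where "Wt = mat n n (\<lambda>(i, j). W j i)"
  define D where "D = mat n n (\<lambda>(i, j). if i = j then d i else (0::real))"
  have A: "A = mat n n (\<lambda>(i, j). \<Sum>k<n. M k i * M k j)"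
    unfolding A_def transpose_mat_fn mat_mult_mat_fn by simp
  have "Wm * Wt = 1\<^sub>m n" "Wt * Wm = 1\<^sub>m n"
    unfolding Wm_def Wt_def mat_mult_mat_fn
    by (auto intro!: eq_matI simp: orthogonal_fn_rows[OF W] orthogonal_fn_cols[OF W] fone_def)
  moreover have WD: "Wm * D = mat n n (\<lambda>(i, k). W i k * d k)"
    using fmult_fdiag_right[of _ n W d] unfolding Wm_def D_def mat_mult_mat_fn
    by (intro eq_matI) (auto simp: fmult_def fdiag_def)
  then have "A = Wm * D * Wt"
    unfolding WD Wt_def mat_mult_mat_fn A by (intro eq_matI) (auto simp: MW)
  ultimately have "similar_mat A D"
    unfolding similar_mat_def similar_mat_wit_def
    by (intro exI[of _ Wm] exI[of _ Wt]) (auto simp: Let_def A Wm_def Wt_def D_def)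
  then have "char_poly A = char_poly D" by (rule char_poly_similar)
  also have "\<dots> = (\<Prod>a\<leftarrow>diag_mat D. [:- a, 1:])"
    by (rule char_poly_upper_triangular[of _ n]) (auto simp: D_def upper_triangular_def)
  also have "diag_mat D = map d [0..<n]"
    unfolding diag_mat_def D_def by auto
  finally have cp: "char_poly A = (\<Prod>a\<leftarrow>map d [0..<n]. [:- a, 1:])" .
  have "trace_norm n M = (\<Sum>e\<in>{e. poly (char_poly A) e = 0}. real (order e (char_poly A)) * sqrt e)"
    unfolding trace_norm_def Let_def A_def by simp
  also have "\<dots> = sum_list (map sqrt (map d [0..<n]))"
    unfolding cp poly_prod_linear_eq_0_iff order_prod_linear sum_list_map_eq_sum_count_real by simp
  also have "\<dots> = (\<Sum>k<n. sqrt (d k))"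
    by (simp add: sum_list_sum_nth atLeast0LessThan)
  finally show ?thesis .
qed

lemma gram_eigendecomposition:
  fixes M :: "nat \<Rightarrow> nat \<Rightarrow> real"
  obtains W d where "orthogonal_fn n W" "trace_norm n M = (\<Sum>k<n. sqrt (d k))"
    "\<forall>k<n. d k = (\<Sum>l<n. (fmult n M W l k)\<^sup>2)"
    "\<forall>i<n. \<forall>k<n. fmult n (fmult n (ftrans M) M) W i k = d k * W i k"
proof -
  define G where "G = fmult n (ftrans M) M"
  have "\<forall>i<n. \<forall>j<n. G i j = G j i" unfolding G_def fmult_def ftrans_def by (auto simp: mult.commute)
  then obtain W d where W: "orthogonal_fn n W" and GW: "\<forall>i<n. \<forall>j<n. G i j = (\<Sum>k<n. W i k * d k * W j k)"
    using symmetric_spectral_decomposition by blast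
  have GW': "G i j = fmult n (fmult n W (fdiag d)) (ftrans W) i j" if "i < n" "j < n" for i j
    using GW that by (simp add: fmult_fdiag_ftrans)
  have "trace_norm n M = (\<Sum>k<n. sqrt (d k))"
    by (rule trace_norm_diagonalized[OF W]) (use GW in \<open>simp add: G_def fmult_def ftrans_def\<close>)
  moreover have "d k = (\<Sum>l<n. (fmult n M W l k)\<^sup>2)" if "k < n" for k
  proof -
    have sq: "(\<Sum>l<n. (N l k)\<^sup>2) = fmult n (ftrans N) N k k" for N
      by (simp add: fmult_def ftrans_def power2_eq_square)
    have "(\<Sum>l<n. (fmult n M W l k)\<^sup>2) = fmult n (ftrans (fmult n M W)) (fmult n M W) k k"
      by (rule sq)
    also have "\<dots> = fmult n (fmult n (ftrans W) G) W k k"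
      unfolding G_def by (simp only: ftrans_fmult fmult_assoc)
    also have "\<dots> = fmult n (fmult n (ftrans W) (fmult n (fmult n W (fdiag d)) (ftrans W))) W k k"
      by (rule fmult_cong_mid) (simp add: GW')
    also have "\<dots> = fmult n (fmult n (fmult n (ftrans W) (fmult n W (fdiag d))) (ftrans W)) W k k"
      by (simp only: fmult_assoc)
    also have "\<dots> = d k"
      using W that by (simp add: fmult_ftrans_orthogonal_right fmult_ftrans_orthogonal_left fdiag_def)
    finally show ?thesis by simp
  qed
  moreover have "fmult n G W i k = d k * W i k" if "i < n" "k < n" for i k
  proof -
    have "fmult n G W i k = fmult n (fmult n (fmult n W (fdiag d)) (ftrans W)) W i k"
      using GW' that by (intro fmult_cong) simp_all
    also have "\<dots> = d k * W i k"
      using W that by (simp add: fmult_ftrans_orthogonal_right)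
    finally show ?thesis .
  qed
  ultimately show ?thesis using that W unfolding G_def by blast
qed

lemma abs_sum_mult_le_L2_set: "\<bar>\<Sum>i\<in>A. f i * g i\<bar> \<le> L2_set f A * L2_set g A"
  using sum_abs[of "\<lambda>i. f i * g i" A] L2_set_mult_ineq[of f g A] by (simp add: abs_mult)

lemma sum_pairing_orthogonal_change:
  assumes W: "orthogonal_fn n W"
  shows "(\<Sum>i<n. \<Sum>j<n. G i j * M i j) = (\<Sum>k<n. \<Sum>l<n. fmult n G W l k * fmult n M W l k)"
proof -
  have row: "(\<Sum>k<n. fmult n G W l k * fmult n M W l k) = (\<Sum>j<n. G l j * M l j)" for l
  proof -
    have "(\<Sum>k<n. fmult n G W l k * fmult n M W l k) = fmult n (fmult n G W) (ftrans (fmult n M W)) l l"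
      by (simp add: fmult_def[of n "fmult n G W"] ftrans_def)
    also have "\<dots> = fmult n (fmult n G (fmult n W (ftrans W))) (ftrans M) l l"
      by (simp only: ftrans_fmult fmult_assoc)
    also have "\<dots> = fmult n (fmult n G fone) (ftrans M) l l"
      using W by (intro fmult_cong_mid) (simp add: orthogonal_fn_def)
    also have "\<dots> = (\<Sum>j<n. G l j * M l j)"
      by (simp add: fmult_def[of n "fmult n G fone"] ftrans_def)
    finally show ?thesis .
  qed
  show ?thesis by (subst sum.swap) (simp add: row)
qed

theorem trace_norm_duality:
  fixes G M :: "nat \<Rightarrow> nat \<Rightarrow> real"
  assumes "c \<ge> 0" and G: "\<forall>v. (\<Sum>i<n. (\<Sum>j<n. G i j * v j)\<^sup>2) \<le> c\<^sup>2 * (\<Sum>j<n. (v j)\<^sup>2)"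
  shows "\<bar>\<Sum>i<n. \<Sum>j<n. G i j * M i j\<bar> \<le> c * trace_norm n M"
proof -
  obtain W d where W: "orthogonal_fn n W" and tn: "trace_norm n M = (\<Sum>k<n. sqrt (d k))"
    and d: "\<forall>k<n. d k = (\<Sum>l<n. (fmult n M W l k)\<^sup>2)"
    by (rule gram_eigendecomposition)
  have column: "L2_set (\<lambda>l. fmult n G W l k) {..<n} \<le> c" if "k < n" for k
  proof -
    have "(\<Sum>l<n. (fmult n G W l k)\<^sup>2) \<le> c\<^sup>2 * (\<Sum>j<n. (W j k)\<^sup>2)"
      using G[rule_format, of "\<lambda>j. W j k"] by (simp add: fmult_def)
    also have "(\<Sum>j<n. (W j k)\<^sup>2) = 1"
      using orthogonal_fn_cols[OF W that that] by (simp add: fone_def power2_eq_square)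
    finally show ?thesis
      using \<open>c \<ge> 0\<close> by (simp add: L2_set_def real_le_lsqrt)
  qed
  have "\<bar>\<Sum>i<n. \<Sum>j<n. G i j * M i j\<bar> \<le> (\<Sum>k<n. \<bar>\<Sum>l<n. fmult n G W l k * fmult n M W l k\<bar>)"
    unfolding sum_pairing_orthogonal_change[OF W, of G M] by (rule sum_abs)
  also have "\<dots> \<le> (\<Sum>k<n. c * sqrt (d k))"
  proof (rule sum_mono)
    fix k assume "k \<in> {..<n}"
    then have "L2_set (\<lambda>l. fmult n M W l k) {..<n} = sqrt (d k)"
      using d by (simp add: L2_set_def)
    then show "\<bar>\<Sum>l<n. fmult n G W l k * fmult n M W l k\<bar> \<le> c * sqrt (d k)"
      using abs_sum_mult_le_L2_set[of "\<lambda>l. fmult n G W l k" "\<lambda>l. fmult n M W l k" "{..<n}"]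
        mult_right_mono[OF column L2_set_nonneg, of k "\<lambda>l. fmult n M W l k" "{..<n}"] \<open>k \<in> {..<n}\<close>
      by simp
  qed
  also have "\<dots> = c * trace_norm n M" by (simp add: tn sum_distrib_left)
  finally show ?thesis .
qed

lemma trace_norm_block_indicator:
  "trace_norm n (\<lambda>i j. if i \<in> T \<and> j \<in> T then 1 else 0) = real (card ({..<n} \<inter> T))"
proof -
  define N :: "nat \<Rightarrow> nat \<Rightarrow> real" where "N = (\<lambda>i j. if i \<in> T \<and> j \<in> T then 1 else 0)"
  define T' where "T' = {..<n} \<inter> T"
  define t where "t = real (card T')"
  obtain W d where W: "orthogonal_fn n W" and tn: "trace_norm n N = (\<Sum>k<n. sqrt (d k))"
    and d: "\<forall>k<n. d k = (\<Sum>l<n. (fmult n N W l k)\<^sup>2)"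
    and eig: "\<forall>i<n. \<forall>k<n. fmult n (fmult n (ftrans N) N) W i k = d k * W i k"
    by (rule gram_eigendecomposition)
  define a where "a = (\<lambda>k. \<Sum>i\<in>T'. W i k)"
  have sum_T: "(\<Sum>i<n. if i \<in> T then f i else 0) = (\<Sum>i\<in>T'. f i)" for f :: "nat \<Rightarrow> real"
    unfolding T'_def by (simp add: sum.inter_restrict)
  have NW: "fmult n N W l k = (if l \<in> T then a k else 0)" for l k
  proof -
    have "fmult n N W l k = (if l \<in> T then (\<Sum>i<n. if i \<in> T then W i k else 0) else 0)"
      unfolding fmult_def N_def by (auto intro!: sum.cong)
    then show ?thesis using sum_T[of "\<lambda>i. W i k"] by (simp add: a_def)
  qed
  have d_a: "d k = t * (a k)\<^sup>2" if "k < n" for k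
  proof -
    have "d k = (\<Sum>l<n. if l \<in> T then (a k)\<^sup>2 else 0)"
      using d that by (auto simp: NW intro!: sum.cong)
    then show ?thesis using sum_T[of "\<lambda>_. (a k)\<^sup>2"] by (simp add: t_def)
  qed
  have eig_a: "t * a k = d k * W i k" if "i \<in> T'" "k < n" for i k
  proof -
    have "fmult n (fmult n (ftrans N) N) W i k = fmult n (ftrans N) (fmult n N W) i k"
      by (simp only: fmult_assoc)
    also have "\<dots> = (\<Sum>l<n. if l \<in> T then a k else 0)"
    proof -
      have "ftrans N i l * (if l \<in> T then a k else 0) = (if l \<in> T then a k else 0)" for l
        using that by (simp add: ftrans_def N_def T'_def)
      then show ?thesis unfolding fmult_def[of n "ftrans N"] NW by (intro sum.cong) simp_all
    qed
    also have "\<dots> = t * a k" using sum_T[of "\<lambda>_. a k"] by (simp add: t_def)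
    finally show ?thesis using eig that by (simp add: T'_def)
  qed
  have "sqrt (d k) = (a k)\<^sup>2" if "k < n" for k
  proof (cases "T' = {}")
    case True
    then show ?thesis using d_a[OF that] by (simp add: a_def t_def)
  next
    case False
    then have "t > 0" by (simp add: t_def T'_def card_gt_0_iff)
    have "t * t * a k = (\<Sum>i\<in>T'. t * a k)" by (simp add: t_def)
    also have "\<dots> = (\<Sum>i\<in>T'. d k * W i k)" using eig_a that by (intro sum.cong) auto
    also have "\<dots> = d k * a k" by (simp add: a_def sum_distrib_left)
    finally have "t * t * a k = d k * a k" .
    then have "t * (a k * (t - (a k)\<^sup>2)) = 0"
      by (simp add: d_a[OF that] algebra_simps power2_eq_square)
    with \<open>t > 0\<close> consider "a k = 0" | "t = (a k)\<^sup>2" by auto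
    then show ?thesis
      by cases (use d_a[OF that] \<open>t > 0\<close> in \<open>simp_all add: power2_eq_square\<close>)
  qed
  then have "trace_norm n N = (\<Sum>k<n. (a k)\<^sup>2)" by (simp add: tn)
  also have "\<dots> = (\<Sum>i\<in>T'. \<Sum>j\<in>T'. \<Sum>k<n. W i k * W j k)"
    unfolding a_def power2_eq_square sum_product by (simp add: sum.swap[of _ "{..<n}"])
  also have "\<dots> = (\<Sum>i\<in>T'. \<Sum>j\<in>T'. fone i j)"
    using orthogonal_fn_rows[OF W] by (intro sum.cong) (auto simp: T'_def)
  also have "\<dots> = t" by (simp add: fone_def t_def T'_def)
  finally show ?thesis by (simp add: N_def t_def T'_def)
qed

section \<open>Operator norm and resolvability\<close>

lemma sum_square_restrict:
  fixes f :: "nat \<Rightarrow> nat \<Rightarrow> real"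
  assumes "S \<subseteq> {..<n}"
  shows "(\<Sum>i<n. \<Sum>j<n. if i \<in> S \<and> j \<in> S then f i j else 0) = (\<Sum>i\<in>S. \<Sum>j\<in>S. f i j)"
proof -
  have "(\<Sum>i<n. \<Sum>j<n. if i \<in> S \<and> j \<in> S then f i j else 0)
      = (\<Sum>i<n. if i \<in> S then (\<Sum>j<n. if j \<in> S then f i j else 0) else 0)"
    by (rule sum.cong) auto
  also have "\<dots> = (\<Sum>i<n. if i \<in> S then (\<Sum>j\<in>S. f i j) else 0)"
    using assms by (simp add: sum.inter_restrict[symmetric] Int_absorb1)
  also have "\<dots> = (\<Sum>i\<in>S. \<Sum>j\<in>S. f i j)"
    using assms by (simp add: sum.inter_restrict[symmetric] Int_absorb1)
  finally show ?thesis .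
qed

lemma op_norm_nonneg_and_bound:
  fixes Y :: "nat \<Rightarrow> nat \<Rightarrow> real"
  assumes "finite S"
  shows op_norm_nonneg: "0 \<le> op_norm S Y"
    and op_norm_bound: "(\<Sum>i\<in>S. (\<Sum>j\<in>S. Y i j * u j)\<^sup>2) \<le> (op_norm S Y)\<^sup>2 * (\<Sum>j\<in>S. (u j)\<^sup>2)"
proof -
  define P where "P = {sqrt (\<Sum>i\<in>S. (\<Sum>j\<in>S. Y i j * x j)\<^sup>2) | x. (\<Sum>j\<in>S. (x j)\<^sup>2) \<le> 1}"
  have bdd: "bdd_above P"
  proof (rule bdd_aboveI)
    fix e assume "e \<in> P"
    then obtain x where e: "e = sqrt (\<Sum>i\<in>S. (\<Sum>j\<in>S. Y i j * x j)\<^sup>2)" and x: "(\<Sum>j\<in>S. (x j)\<^sup>2) \<le> 1"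
      unfolding P_def by blast
    have "(\<Sum>i\<in>S. (\<Sum>j\<in>S. Y i j * x j)\<^sup>2) \<le> (\<Sum>i\<in>S. (\<Sum>j\<in>S. (Y i j)\<^sup>2) * (\<Sum>j\<in>S. (x j)\<^sup>2))"
      by (intro sum_mono Cauchy_Schwarz_ineq_sum)
    also have "\<dots> \<le> (\<Sum>i\<in>S. \<Sum>j\<in>S. (Y i j)\<^sup>2)"
      using x by (intro sum_mono mult_left_le sum_nonneg) auto
    finally show "e \<le> sqrt (\<Sum>i\<in>S. \<Sum>j\<in>S. (Y i j)\<^sup>2)" unfolding e by (rule real_sqrt_le_mono)
  qed
  have le_op: "sqrt (\<Sum>i\<in>S. (\<Sum>j\<in>S. Y i j * x j)\<^sup>2) \<le> op_norm S Y"
    if "(\<Sum>j\<in>S. (x j)\<^sup>2) \<le> 1" for x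
    unfolding op_norm_def P_def[symmetric] by (rule cSup_upper[OF _ bdd]) (use that in \<open>auto simp: P_def\<close>)
  show nonneg: "0 \<le> op_norm S Y" using le_op[of "\<lambda>_. 0"] by simp
  define q where "q = (\<Sum>j\<in>S. (u j)\<^sup>2)"
  show "(\<Sum>i\<in>S. (\<Sum>j\<in>S. Y i j * u j)\<^sup>2) \<le> (op_norm S Y)\<^sup>2 * (\<Sum>j\<in>S. (u j)\<^sup>2)"
  proof (cases "q = 0")
    case True
    then have "\<forall>j\<in>S. u j = 0" unfolding q_def using assms by (simp add: sum_nonneg_eq_0_iff)
    then show ?thesis by simp
  next
    case False
    then have "q > 0" unfolding q_def by (metis less_eq_real_def sum_nonneg zero_le_power2)
    have "(\<Sum>j\<in>S. (u j / sqrt q)\<^sup>2) = 1"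
      using \<open>q > 0\<close> by (simp add: power_divide q_def[symmetric] flip: sum_divide_distrib)
    then have "sqrt (\<Sum>i\<in>S. (\<Sum>j\<in>S. Y i j * (u j / sqrt q))\<^sup>2) \<le> op_norm S Y"
      by (intro le_op) simp
    moreover have "(\<Sum>i\<in>S. (\<Sum>j\<in>S. Y i j * (u j / sqrt q))\<^sup>2) = (\<Sum>i\<in>S. (\<Sum>j\<in>S. Y i j * u j)\<^sup>2) / q"
      using \<open>q > 0\<close> by (simp add: sum_divide_distrib[symmetric] power_divide)
    ultimately have "(\<Sum>i\<in>S. (\<Sum>j\<in>S. Y i j * u j)\<^sup>2) / q \<le> (op_norm S Y)\<^sup>2"
      using nonneg real_sqrt_le_iff[of _ "(op_norm S Y)\<^sup>2"] by simp
    then show ?thesis using \<open>q > 0\<close> by (simp add: q_def[symmetric] pos_divide_le_eq mult.commute)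
  qed
qed

lemma op_norm_signed_padding:
  fixes l v :: "nat \<Rightarrow> real"
  assumes S: "S \<subseteq> {..<n}" and signs: "\<forall>i\<in>S. \<bar>l i\<bar> = 1" and Y: "op_norm S Y \<le> c"
  shows "(\<Sum>i<n. (\<Sum>j<n. (if i \<in> S \<and> j \<in> S then l i * l j * Y i j else 0) * v j)\<^sup>2)
           \<le> c\<^sup>2 * (\<Sum>j<n. (v j)\<^sup>2)"
proof -
  have fin: "finite S" using S finite_subset by blast
  have l2: "(l i)\<^sup>2 = 1" if "i \<in> S" for i
    using signs that power2_abs[of "l i"] by simp
  define u where "u = (\<lambda>j. l j * v j)"
  have "(\<Sum>j<n. (if i \<in> S \<and> j \<in> S then l i * l j * Y i j else 0) * v j)
      = (if i \<in> S then l i * (\<Sum>j\<in>S. Y i j * u j) else 0)" for i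
  proof -
    have "(\<Sum>j<n. (if i \<in> S \<and> j \<in> S then l i * l j * Y i j else 0) * v j)
        = (\<Sum>j<n. if j \<in> S then (if i \<in> S then l i * (Y i j * u j) else 0) else 0)"
      by (rule sum.cong) (auto simp: u_def mult_ac)
    then show ?thesis using S by (simp add: sum.inter_restrict[symmetric] Int_absorb1 sum_distrib_left)
  qed
  then have "(\<Sum>i<n. (\<Sum>j<n. (if i \<in> S \<and> j \<in> S then l i * l j * Y i j else 0) * v j)\<^sup>2)
      = (\<Sum>i<n. if i \<in> S then (\<Sum>j\<in>S. Y i j * u j)\<^sup>2 else 0)"
    by (intro sum.cong) (auto simp: power_mult_distrib l2)
  also have "\<dots> = (\<Sum>i\<in>S. (\<Sum>j\<in>S. Y i j * u j)\<^sup>2)"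
    using S by (simp add: sum.inter_restrict[symmetric] Int_absorb1)
  also have "\<dots> \<le> (op_norm S Y)\<^sup>2 * (\<Sum>j\<in>S. (u j)\<^sup>2)" by (rule op_norm_bound[OF fin])
  also have "\<dots> \<le> c\<^sup>2 * (\<Sum>j<n. (v j)\<^sup>2)"
  proof (rule mult_mono)
    show "(op_norm S Y)\<^sup>2 \<le> c\<^sup>2" using op_norm_nonneg[OF fin] Y by (intro power_mono) auto
    have "(\<Sum>j\<in>S. (u j)\<^sup>2) = (\<Sum>j\<in>S. (v j)\<^sup>2)" by (rule sum.cong) (auto simp: u_def power_mult_distrib l2)
    also have "\<dots> \<le> (\<Sum>j<n. (v j)\<^sup>2)" using S by (intro sum_mono2) auto
    finally show "(\<Sum>j\<in>S. (u j)\<^sup>2) \<le> (\<Sum>j<n. (v j)\<^sup>2)" .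
  qed (simp_all add: sum_nonneg)
  finally show ?thesis .
qed

lemma signed_pairing_le_trace_norm:
  fixes l :: "nat \<Rightarrow> real"
  assumes S: "S \<subseteq> {..<n}" and signs: "\<forall>i\<in>S. \<bar>l i\<bar> = 1" and Y: "op_norm S Y \<le> c"
  shows "\<bar>\<Sum>i\<in>S. \<Sum>j\<in>S. l i * l j * Y i j * N i j\<bar> \<le> c * trace_norm n N"
proof -
  have "0 \<le> c" using op_norm_nonneg[of S Y] Y S finite_subset by fastforce
  then have "\<bar>\<Sum>i<n. \<Sum>j<n. (if i \<in> S \<and> j \<in> S then l i * l j * Y i j else 0) * N i j\<bar> \<le> c * trace_norm n N"
    by (rule trace_norm_duality) (intro allI op_norm_signed_padding[OF S signs Y])
  moreover have "(\<Sum>i<n. \<Sum>j<n. (if i \<in> S \<and> j \<in> S then l i * l j * Y i j else 0) * N i j)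
      = (\<Sum>i<n. \<Sum>j<n. if i \<in> S \<and> j \<in> S then l i * l j * Y i j * N i j else 0)"
    by (intro sum.cong) auto
  ultimately show ?thesis
    using sum_square_restrict[OF S, of "\<lambda>i j. l i * l j * Y i j * N i j"] by simp
qed

lemma signed_pairing_le_entrywise:
  fixes l :: "nat \<Rightarrow> real" and Z N :: "nat \<Rightarrow> nat \<Rightarrow> real"
  assumes S: "S \<subseteq> {..<n}" and signs: "\<forall>i\<in>S. \<bar>l i\<bar> = 1"
    and Z: "\<forall>i\<in>S. \<forall>j\<in>S. \<bar>Z i j\<bar> \<le> c" and "0 \<le> c"
  shows "\<bar>\<Sum>i\<in>S. \<Sum>j\<in>S. l i * l j * Z i j * N i j\<bar> \<le> c * (\<Sum>i<n. \<Sum>j<n. \<bar>N i j\<bar>)"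
proof -
  have "\<bar>\<Sum>i\<in>S. \<Sum>j\<in>S. l i * l j * Z i j * N i j\<bar> \<le> (\<Sum>i\<in>S. \<Sum>j\<in>S. \<bar>l i * l j * Z i j * N i j\<bar>)"
    by (rule order_trans[OF sum_abs sum_mono[OF sum_abs]])
  also have "\<dots> \<le> (\<Sum>i\<in>S. \<Sum>j\<in>S. c * \<bar>N i j\<bar>)"
    using signs Z by (intro sum_mono) (auto simp: abs_mult intro!: mult_right_mono)
  also have "\<dots> \<le> (\<Sum>i\<in>S. \<Sum>j<n. c * \<bar>N i j\<bar>)"
    using S \<open>0 \<le> c\<close> by (intro sum_mono sum_mono2) auto
  also have "\<dots> \<le> (\<Sum>i<n. \<Sum>j<n. c * \<bar>N i j\<bar>)"
    using S \<open>0 \<le> c\<close> by (intro sum_mono2 sum_nonneg) auto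
  finally show ?thesis by (simp add: sum_distrib_left)
qed

lemma frob_rowmat: "frob S X (rowmat x) = (\<Sum>i\<in>S. \<Sum>j\<in>S. X i j * x i)"
  by (simp add: frob_def rowmat_def)

lemma resolvable_lower_bound:
  assumes R: "resolvable S X d1 d2" and "finite S" and "0 \<le> d2"
    and x: "\<forall>i\<in>S. 0 \<le> x i \<and> x i \<le> 1"
  shows "frob S X (rowmat x) \<ge> d1 * (\<Sum>i\<in>S. x i) - d2 * real (card S) - 10^6 * d2 * (\<Sum>i\<in>S. x i)"
proof -
  have p6: "(10::real) powr (-6) = 1 / 10^6" by (simp add: powr_minus powr_realpow)
  have R': "frob S X (rowmat y) \<ge> d1 * (\<Sum>i\<in>S. y i) - d2 * real (card S)"
    if "\<forall>i\<in>S. 0 \<le> y i \<and> y i \<le> 1" "(\<Sum>i\<in>S. y i) \<le> 1 / 10^6 * real (card S)" for y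
    using R that unfolding resolvable_def p6 by blast
  define s where "s = (\<Sum>i\<in>S. x i)"
  have "0 \<le> s" unfolding s_def using x by (auto intro: sum_nonneg)
  show ?thesis
  proof (cases "s \<le> 1 / 10^6 * real (card S)")
    case True
    then have "frob S X (rowmat x) \<ge> d1 * s - d2 * real (card S)"
      using R'[OF x] by (simp add: s_def)
    moreover have "0 \<le> 10^6 * d2 * s" using \<open>0 \<le> d2\<close> \<open>0 \<le> s\<close> by simp
    ultimately show ?thesis unfolding s_def[symmetric] by linarith
  next
    case False
    \<comment> \<open>shrink \<open>x\<close> by the factor \<open>c > 1\<close> into the range where resolvability applies\<close>
    have "S \<noteq> {}" using False by (auto simp: s_def)
    then have "card S > 0" using \<open>finite S\<close> by (simp add: card_gt_0_iff)
    define c where "c = 10^6 * s / real (card S)"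
    have "c > 1" using False \<open>card S > 0\<close> by (simp add: c_def field_simps)
    have xc: "\<forall>i\<in>S. 0 \<le> x i / c \<and> x i / c \<le> 1" using x \<open>c > 1\<close> by (auto simp: divide_le_eq_1)
    have sc: "(\<Sum>i\<in>S. x i / c) = s / c" by (simp add: s_def sum_divide_distrib)
    have "s / c = 1 / 10^6 * real (card S)"
      using \<open>card S > 0\<close> \<open>c > 1\<close> by (simp add: c_def)
    then have "frob S X (rowmat (\<lambda>i. x i / c)) \<ge> d1 * (s / c) - d2 * real (card S)"
      using R'[OF xc, unfolded sc] by simp
    moreover have "frob S X (rowmat (\<lambda>i. x i / c)) = frob S X (rowmat x) / c"
      unfolding frob_rowmat by (simp add: sum_divide_distrib)
    ultimately have "frob S X (rowmat x) \<ge> c * (d1 * (s / c) - d2 * real (card S))"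
      using \<open>c > 1\<close> by (simp add: pos_le_divide_eq mult.commute)
    also have "c * (d1 * (s / c) - d2 * real (card S)) = d1 * s - 10^6 * d2 * s"
      using \<open>c > 1\<close> \<open>card S > 0\<close> by (simp add: c_def field_simps)
    finally have "frob S X (rowmat x) \<ge> d1 * s - 10^6 * d2 * s" .
    moreover have "0 \<le> d2 * real (card S)" using \<open>0 \<le> d2\<close> by simp
    ultimately show ?thesis unfolding s_def by linarith
  qed
qed

section \<open>Feasibility of the certificate\<close>

lemma sum_abs_block_indicator:
  fixes T :: "nat set"
  shows "(\<Sum>i<n. \<Sum>j<n. \<bar>if i \<in> T \<and> j \<in> T then 1 else 0 :: real\<bar>) = (real (card ({..<n} \<inter> T)))\<^sup>2"
proof -
  have card: "(\<Sum>i<n. if i \<in> T then c else 0) = real (card ({..<n} \<inter> T)) * c" for c :: real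
    using sum.inter_restrict[OF finite_lessThan[of n], where g = "\<lambda>_. c" and B = T] by simp
  have "(\<Sum>i<n. \<Sum>j<n. \<bar>if i \<in> T \<and> j \<in> T then 1 else 0 :: real\<bar>)
      = (\<Sum>i<n. if i \<in> T then (\<Sum>j<n. if j \<in> T then 1 else 0) else 0)"
    by (intro sum.cong) auto
  then show ?thesis by (simp add: card power2_eq_square)
qed

lemma pseudorect_block_indicator:
  assumes "0 \<le> \<theta>" and "real (card ({..<n} \<inter> T)) \<le> \<theta> * real n"
  shows "pseudorect n \<theta> (\<lambda>i j. if i \<in> T \<and> j \<in> T then 1 else 0)"
  unfolding pseudorect_def sum_abs_block_indicator trace_norm_block_indicator
  using assms by (auto simp: power_mult_distrib[symmetric] intro!: power_mono)

lemma sum_indicator_outside: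
  fixes S :: "nat set"
  shows "(\<Sum>i<n. if i \<in> S then 0 else 1) = real (card ({..<n} \<inter> - S))"
proof -
  have "(\<Sum>i<n. if i \<in> S then 0 else 1) = (\<Sum>i<n. if i \<in> - S then 1 else 0 :: real)"
    by (intro sum.cong) auto
  also have "\<dots> = real (card ({..<n} \<inter> - S))"
    using sum.inter_restrict[OF finite_lessThan[of n], where g = "\<lambda>_. 1::real" and B = "- S"] by simp
  finally show ?thesis .
qed

lemma card_outside_le:
  assumes "S \<subseteq> {..<n}" and "(1 - \<theta>) * real n \<le> real (card S)"
  shows "real (card ({..<n} \<inter> - S)) \<le> \<theta> * real n"
proof -
  have "card ({..<n} \<inter> - S) = n - card S"
    using assms(1) by (simp add: Diff_eq[symmetric] card_Diff_subset finite_subset)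
  then show ?thesis
    using assms card_mono[OF _ assms(1)] by (simp add: of_nat_diff algebra_simps)
qed

locale boosting_certificate =
  fixes n :: nat and A F Y Z :: "nat \<Rightarrow> nat \<Rightarrow> real" and l :: "nat \<Rightarrow> real"
    and \<zeta> d K \<theta> :: real and S :: "nat set"
  assumes labels: "\<forall>i<n. l i = -1 \<or> l i = 1"
    and zeta: "0 < \<zeta>" "\<zeta> < 1" and d_pos: "0 < d" and K_large: "10^4 \<le> K"
    and S_sub: "S \<subseteq> {..<n}" and S_nonempty: "S \<noteq> {}"
    and theta: "0 \<le> \<theta>" "\<theta> \<le> \<zeta>"
    and signal_nonneg: "\<forall>i\<in>S. \<forall>j\<in>S. F i j * (l i * l j) \<ge> 0"
    and noise_split: "\<forall>i\<in>S. \<forall>j\<in>S. A i j - F i j = Y i j + Z i j"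
    and noise_op: "op_norm S Y \<le> K * d"
    and noise_entries: "\<forall>i\<in>S. \<forall>j\<in>S. \<bar>Z i j\<bar> \<le> K * d / (\<zeta> * real n)"
    and resolvable: "resolvable S (hadamard (\<lambda>i j. A i j - F i j) (\<lambda>i j. l i * l j)) (10 * d * K^3) (\<theta> * d * K)"
begin

lemma finite_S: "finite S"
  using S_sub finite_subset by blast

lemma card_S_pos: "0 < card S"
  using S_nonempty finite_S by (simp add: card_gt_0_iff)

lemma card_S_le: "real (card S) \<le> real n"
  using card_mono[OF _ S_sub] by simp

lemma signs: "\<forall>i\<in>S. \<bar>l i\<bar> = 1"
  using labels S_sub by fastforce

lemma K_pos: "0 < K"
  using K_large by simp

lemma noise_pairing_le:
  "\<bar>\<Sum>i\<in>S. \<Sum>j\<in>S. (A i j - F i j) * (l i * l j) * N i j\<bar>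
     \<le> K * d * trace_norm n N + K * d / (\<zeta> * real n) * (\<Sum>i<n. \<Sum>j<n. \<bar>N i j\<bar>)"
proof -
  have "(\<Sum>i\<in>S. \<Sum>j\<in>S. (A i j - F i j) * (l i * l j) * N i j)
      = (\<Sum>i\<in>S. \<Sum>j\<in>S. l i * l j * Y i j * N i j) + (\<Sum>i\<in>S. \<Sum>j\<in>S. l i * l j * Z i j * N i j)"
    using noise_split by (simp add: sum.distrib[symmetric] algebra_simps)
  moreover have "\<bar>\<Sum>i\<in>S. \<Sum>j\<in>S. l i * l j * Y i j * N i j\<bar> \<le> K * d * trace_norm n N"
    by (rule signed_pairing_le_trace_norm[OF S_sub signs noise_op])
  moreover have "\<bar>\<Sum>i\<in>S. \<Sum>j\<in>S. l i * l j * Z i j * N i j\<bar> \<le> K * d / (\<zeta> * real n) * (\<Sum>i<n. \<Sum>j<n. \<bar>N i j\<bar>)"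
    using zeta d_pos K_pos by (intro signed_pairing_le_entrywise[OF S_sub signs noise_entries]) simp
  ultimately show ?thesis by linarith
qed

lemma theta_le_hundredth: "\<theta> \<le> 1/100"
proof (rule ccontr)
  assume "\<not> \<theta> \<le> 1/100"
  define m where "m = real (card S)"
  have "0 < m" using card_S_pos by (simp add: m_def)
  have "m \<le> real n" using card_S_le by (simp add: m_def)
  then have "0 < real n" using \<open>0 < m\<close> by linarith
  define X where "X = hadamard (\<lambda>i j. A i j - F i j) (\<lambda>i j. l i * l j)"
  \<comment> \<open>pair the noise with the all-ones block on \<open>S \<times> S\<close> and compare with resolvability at \<open>x = 1\<close>\<close>
  have "frob S X (rowmat (\<lambda>_. 1)) = (\<Sum>i\<in>S. \<Sum>j\<in>S. (A i j - F i j) * (l i * l j) * (if i \<in> S \<and> j \<in> S then 1 else 0))"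
    by (simp add: frob_rowmat X_def hadamard_def)
  also have "\<dots> \<le> K * d * m + K * d / (\<zeta> * real n) * m\<^sup>2"
    using noise_pairing_le[of "\<lambda>i j. if i \<in> S \<and> j \<in> S then 1 else 0"] S_sub
    unfolding trace_norm_block_indicator sum_abs_block_indicator m_def
    by (simp add: Int_absorb1)
  also have "K * d / (\<zeta> * real n) * m\<^sup>2 \<le> K * d / \<zeta> * m"
  proof -
    have "K * d / (\<zeta> * real n) * m\<^sup>2 = K * d / \<zeta> * m * (m / real n)"
      by (simp add: power2_eq_square field_simps)
    also have "\<dots> \<le> K * d / \<zeta> * m * 1"
      using \<open>m \<le> real n\<close> \<open>0 < real n\<close> \<open>0 < m\<close> zeta d_pos K_pos
      by (intro mult_left_mono) auto
    finally show ?thesis by simp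
  qed
  finally have upper: "frob S X (rowmat (\<lambda>_. 1)) \<le> K * d * m * (1 + 1 / \<zeta>)"
    by (simp add: algebra_simps)
  have "frob S X (rowmat (\<lambda>_. 1)) \<ge> 10 * d * K^3 * m - \<theta> * d * K * m - 10^6 * (\<theta> * d * K) * m"
    using resolvable_lower_bound[OF resolvable[folded X_def] finite_S, of "\<lambda>_. 1"] theta d_pos K_pos
    by (simp add: m_def)
  with upper have "K * d * m * (10 * K^2 - (10^6 + 1) * \<theta>) \<le> K * d * m * (1 + 1 / \<zeta>)"
    by (simp add: algebra_simps power2_eq_square power3_eq_cube)
  then have "10 * K^2 - (10^6 + 1) * \<theta> \<le> 1 + 1 / \<zeta>"
    using \<open>0 < m\<close> d_pos K_pos by (simp add: mult_le_cancel_left_pos)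
  moreover have "1 / \<zeta> < 100"
    using \<open>\<not> \<theta> \<le> 1/100\<close> theta zeta by (simp add: divide_less_eq)
  moreover have "(10^4)\<^sup>2 \<le> K\<^sup>2"
    using K_large by (intro power_mono) auto
  ultimately show False using theta zeta by simp
qed

lemma selector_noise_le:
  assumes "0 \<le> \<rho>" "\<rho> \<le> \<zeta>" and N: "pseudorect n (\<rho> * sqrt K) N"
  shows "\<bar>\<Sum>i\<in>S. \<Sum>j\<in>S. (A i j - F i j) * (l i * l j) * N i j\<bar> \<le> 2 * (K^2 * d * \<rho> * real n)"
proof -
  have "0 < real n" using card_S_pos card_S_le by linarith
  have "sqrt K \<le> K"
    using K_large real_sqrt_le_iff[of K "K * K"] by (simp add: mult_le_cancel_left1 del: real_sqrt_le_iff)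
  have "K * d * trace_norm n N \<le> K * d * (\<rho> * sqrt K * real n)"
    using N d_pos K_pos unfolding pseudorect_def by (intro mult_left_mono) auto
  also have "\<dots> \<le> K * d * (\<rho> * K * real n)"
    using \<open>sqrt K \<le> K\<close> \<open>0 \<le> \<rho>\<close> d_pos K_pos by (intro mult_left_mono mult_right_mono) auto
  finally have trace: "K * d * trace_norm n N \<le> K^2 * d * \<rho> * real n"
    by (simp add: power2_eq_square mult_ac)
  have "K * d / (\<zeta> * real n) * (\<Sum>i<n. \<Sum>j<n. \<bar>N i j\<bar>) \<le> K * d / (\<zeta> * real n) * ((\<rho> * sqrt K)\<^sup>2 * (real n)\<^sup>2)"
    using N d_pos K_pos zeta unfolding pseudorect_def by (intro mult_left_mono) auto
  also have "\<dots> = K^2 * d * \<rho> * real n * (\<rho> / \<zeta>)"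
    using \<open>0 < real n\<close> zeta K_pos by (simp add: power2_eq_square field_simps)
  also have "\<dots> \<le> K^2 * d * \<rho> * real n * 1"
    using assms zeta d_pos by (intro mult_left_mono) auto
  finally have entries: "K * d / (\<zeta> * real n) * (\<Sum>i<n. \<Sum>j<n. \<bar>N i j\<bar>) \<le> K^2 * d * \<rho> * real n"
    by simp
  show ?thesis using noise_pairing_le[of N] trace entries by linarith
qed

lemma resolvable_term_ge:
  assumes "\<theta> / K \<le> \<rho>" and x: "\<forall>i\<in>S. 0 \<le> x i \<and> x i \<le> 1" and s: "(\<Sum>i\<in>S. x i) \<le> \<rho> * real n"
  shows "frob S (hadamard (\<lambda>i j. A i j - F i j) (\<lambda>i j. l i * l j)) (rowmat x)
           \<ge> 10 * d * K^3 * (\<Sum>i\<in>S. x i) - 2 * (K^2 * d * \<rho> * real n)"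
proof -
  have "\<theta> \<le> K * \<rho>" using assms(1) K_pos by (simp add: divide_le_eq mult.commute)
  have "0 \<le> (\<Sum>i\<in>S. x i)" using x by (auto intro: sum_nonneg)
  have "(\<theta> * d * K) * real (card S) \<le> (K * \<rho> * d * K) * real n"
    using \<open>\<theta> \<le> K * \<rho>\<close> card_S_le theta d_pos K_pos by (intro mult_mono) auto
  also have "\<dots> = K^2 * d * \<rho> * real n" by (simp add: power2_eq_square mult_ac)
  finally have card_term: "\<theta> * d * K * real (card S) \<le> K^2 * d * \<rho> * real n" .
  have "10^6 * (\<theta> * d * K) * (\<Sum>i\<in>S. x i) = (10^6 * \<theta>) * (d * K * (\<Sum>i\<in>S. x i))"
    by (simp add: mult_ac)
  also have "\<dots> \<le> K * (d * K * (\<Sum>i\<in>S. x i))"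
    using theta_le_hundredth K_large d_pos K_pos \<open>0 \<le> (\<Sum>i\<in>S. x i)\<close> by (intro mult_right_mono) auto
  also have "\<dots> \<le> K * (d * K * (\<rho> * real n))"
    using s d_pos K_pos by (intro mult_left_mono) auto
  also have "\<dots> = K^2 * d * \<rho> * real n" by (simp add: power2_eq_square mult_ac)
  finally have scaling_term: "10^6 * (\<theta> * d * K) * (\<Sum>i\<in>S. x i) \<le> K^2 * d * \<rho> * real n" .
  have "0 \<le> \<theta> * d * K" using theta d_pos K_pos by simp
  from resolvable_lower_bound[OF resolvable finite_S this x]
  show ?thesis using card_term scaling_term by linarith
qed

lemma reweighted_pairing_split:
  assumes "\<forall>i<n. \<forall>j<n. M i j = x i - N i j"
  shows "frob {..<n} (hadamard (hadamard A (\<lambda>i j. l i * l j)) (\<lambda>i j. if i \<in> S \<and> j \<in> S then 1 else 0)) M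
    = (\<Sum>i\<in>S. \<Sum>j\<in>S. F i j * (l i * l j) * M i j)
      + frob S (hadamard (\<lambda>i j. A i j - F i j) (\<lambda>i j. l i * l j)) (rowmat x)
      - (\<Sum>i\<in>S. \<Sum>j\<in>S. (A i j - F i j) * (l i * l j) * N i j)"
proof -
  have "frob {..<n} (hadamard (hadamard A (\<lambda>i j. l i * l j)) (\<lambda>i j. if i \<in> S \<and> j \<in> S then 1 else 0)) M
      = (\<Sum>i<n. \<Sum>j<n. if i \<in> S \<and> j \<in> S then A i j * (l i * l j) * M i j else 0)"
    unfolding frob_def hadamard_def by (intro sum.cong refl) auto
  also have "\<dots> = (\<Sum>i\<in>S. \<Sum>j\<in>S. A i j * (l i * l j) * M i j)"
    by (rule sum_square_restrict[OF S_sub])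
  also have "\<dots> = (\<Sum>i\<in>S. \<Sum>j\<in>S. F i j * (l i * l j) * M i j
      + ((A i j - F i j) * (l i * l j) * x i - (A i j - F i j) * (l i * l j) * N i j))"
  proof (intro sum.cong refl)
    fix i j assume "i \<in> S" "j \<in> S"
    then have "i < n" "j < n" using S_sub by auto
    then have "x i = M i j + N i j" using assms by simp
    then show "A i j * (l i * l j) * M i j = F i j * (l i * l j) * M i j
      + ((A i j - F i j) * (l i * l j) * x i - (A i j - F i j) * (l i * l j) * N i j)"
      by (simp add: algebra_simps)
  qed
  finally show ?thesis
    by (simp add: frob_rowmat hadamard_def sum.distrib sum_subtractf)
qed

lemma reweighted_constraint:
  assumes rho: "\<theta> / K \<le> \<rho>" "\<rho> \<le> \<zeta>" and sel: "row_selector n \<rho> (K * \<rho>) M x"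
  shows "frob {..<n} (hadamard (hadamard A (\<lambda>i j. l i * l j)) (\<lambda>i j. if i \<in> S \<and> j \<in> S then 1 else 0)) M
           \<ge> 10 * d * K\<^sup>2 * (K * (\<Sum>i<n. x i * (1 - (if i \<in> S then 0 else 1))) - \<rho> * real n)"
proof -
  have "0 \<le> \<theta> / K" using theta K_pos by simp
  with rho(1) have "0 \<le> \<rho>" by linarith
  obtain N where M: "\<forall>i<n. \<forall>j<n. 0 \<le> M i j \<and> M i j \<le> 1" and x: "\<forall>i<n. 0 \<le> x i \<and> x i \<le> 1"
    and x_sum: "(\<Sum>i<n. x i) \<le> \<rho> * real n"
    and N: "pseudorect n (sqrt (\<rho> * (K * \<rho>))) N" and MN: "\<forall>i<n. \<forall>j<n. M i j = rowmat x i j - N i j"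
    using sel unfolding row_selector_def by blast
  have "sqrt (\<rho> * (K * \<rho>)) = \<rho> * sqrt K"
    using \<open>0 \<le> \<rho>\<close> K_pos by (simp add: real_sqrt_mult mult.commute[of K])
  with N have N: "pseudorect n (\<rho> * sqrt K) N" by simp
  define s where "s = (\<Sum>i\<in>S. x i)"
  have xS: "\<forall>i\<in>S. 0 \<le> x i \<and> x i \<le> 1" using x S_sub by auto
  have "s \<le> (\<Sum>i<n. x i)" unfolding s_def using S_sub x by (intro sum_mono2) auto
  with x_sum have "s \<le> \<rho> * real n" by linarith
  have "(\<Sum>i<n. x i * (1 - (if i \<in> S then 0 else 1))) = (\<Sum>i<n. if i \<in> S then x i else 0)"
    by (intro sum.cong) auto
  also have "\<dots> = s" using S_sub by (simp add: s_def sum.inter_restrict[symmetric] Int_absorb1)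
  finally have weights: "(\<Sum>i<n. x i * (1 - (if i \<in> S then 0 else 1))) = s" .
  have signal: "0 \<le> (\<Sum>i\<in>S. \<Sum>j\<in>S. F i j * (l i * l j) * M i j)"
  proof (intro sum_nonneg)
    fix i j assume "i \<in> S" "j \<in> S"
    moreover from this have "i < n" "j < n" using S_sub by auto
    ultimately have "0 \<le> F i j * (l i * l j)" "0 \<le> M i j" using signal_nonneg M by auto
    then show "0 \<le> F i j * (l i * l j) * M i j" by (rule mult_nonneg_nonneg)
  qed
  have "0 \<le> K^2 * d * \<rho> * real n" using \<open>0 \<le> \<rho>\<close> d_pos by simp
  then show ?thesis
    using reweighted_pairing_split[of M x N] MN signal selector_noise_le[OF \<open>0 \<le> \<rho>\<close> rho(2) N]
      resolvable_term_ge[OF rho(1) xS \<open>s \<le> \<rho> * real n\<close>[unfolded s_def]]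
    unfolding weights s_def[symmetric]
    by (simp add: rowmat_def power2_eq_square power3_eq_cube algebra_simps)
qed

end

theorem mainTheorem12:
  fixes n :: nat and A F :: "nat \<Rightarrow> nat \<Rightarrow> real" and l :: "nat \<Rightarrow> real"
    and \<zeta> d K \<theta> :: real and S :: "nat set"
  assumes l: "\<forall>i<n. l i = -1 \<or> l i = 1"
    and \<zeta>: "0 < \<zeta>" "\<zeta> < 1" and d: "d > 0" and K: "K \<ge> 10^4"
    and S: "S \<subseteq> {..<n}" "real (card S) \<ge> (1 - \<theta>) * real n"
    and \<theta>: "0 \<le> \<theta>" "\<theta> \<le> \<zeta>"
    and i: "\<forall>i\<in>S. \<forall>j\<in>S. F i j * (l i * l j) \<ge> 0"
    and ii: "\<exists>Y Z. (\<forall>i\<in>S. \<forall>j\<in>S. A i j - F i j = Y i j + Z i j) \<and> op_norm S Y \<le> K * d \<and>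
               (\<forall>i\<in>S. \<forall>j\<in>S. \<bar>Z i j\<bar> \<le> K * d / (\<zeta> * real n))"
    and iii: "resolvable S (hadamard (\<lambda>i j. A i j - F i j) (\<lambda>i j. l i * l j)) (10 * d * K^3) (\<theta> * d * K)"
  shows "boost_feasible n A l \<zeta> d K \<theta>
           (\<lambda>i. if i \<in> S then 0 else 1)
           (\<lambda>i j. if i \<in> S \<and> j \<in> S then 1 else 0)
           (\<lambda>i j. if i \<notin> S \<and> j \<notin> S then 1 else 0)"
proof -
  have outside: "real (card ({..<n} \<inter> - S)) \<le> \<theta> * real n"
    by (rule card_outside_le[OF S])
  have constraint: "frob {..<n} (hadamard (hadamard A (\<lambda>i j. l i * l j)) (\<lambda>i j. if i \<in> S \<and> j \<in> S then 1 else 0)) M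
        \<ge> 10 * d * K\<^sup>2 * (K * (\<Sum>i<n. x i * (1 - (if i \<in> S then 0 else 1))) - \<rho> * real n)"
    if "\<theta> / K \<le> \<rho>" "\<rho> \<le> \<zeta>" "row_selector n \<rho> (K * \<rho>) M x" for \<rho> M x
  proof (cases "n = 0")
    case False
    \<comment> \<open>\<open>\<theta> < 1\<close> forces \<open>S\<close> to be nonempty\<close>
    with S(2) \<theta> \<zeta> have "S \<noteq> {}" by (auto simp: mult_le_0_iff)
    with ii obtain Y Z where "boosting_certificate n A F Y Z l \<zeta> d K \<theta> S"
      using l \<zeta> d K S(1) \<theta> i iii unfolding boosting_certificate_def by blast
    then show ?thesis using that by (rule boosting_certificate.reweighted_constraint)
  qed (simp add: frob_def)
  show ?thesis
    unfolding boost_feasible_def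
    using \<theta> outside pseudorect_block_indicator[OF \<theta>(1) outside] sum_indicator_outside[of S n] constraint
    by auto
qed

end
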